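(* Let $n\ge1$ and $S\subseteq[n-1]$. Then \[\#\{\pi\in\mathrm{Av}_n(132)\mid \mathrm{Des}(\pi)=S\}=\#\{\mathcal D\text{ Dyck path of semilength } n\mid \delta(\mathcal D)=\alpha(S)\}.\]
   Context: $\mathrm{Av}_n(132)$ is the set of permutations of $[n]=\{1,\dots,n\}$ with no subsequence order-isomorphic to $132$. $\mathrm{Des}(\pi)=\{i\in[n-1]:\pi(i)>\pi(i+1)\}$. For $S=\{s_1<\dots<s_m\}\subseteq[n-1]$, $\alpha(S)$ is the composition $(s_1,s_2-s_1,\dots,s_m-s_{m-1},n-s_m)$ of $n$. A Dyck path of semilength $n$ is a word in $U,D$ with $n$ letters of each kind such that every prefix has at least as many $U$'s as $D$'s. Writing such a path uniquely as $U^{\alpha_1}D^{\delta_1}U^{\alpha_2}D^{\delta_2}\cdots U^{\alpha_k}D^{\delta_k}$ with all exponents positive, its ascent composition is $(\alpha_1,\dots,\alpha_k)$ and its descent composition is $\delta(\mathcal D)=(\delta_1,\dots,\delta_k)$. *)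

theory Defs
  imports Main
begin

(* Permutations of [n] are represented as lists: p ! (i-1) = pi(i). *)
definition is_perm :: "nat \<Rightarrow> nat list \<Rightarrow> bool" where
  "is_perm n p \<longleftrightarrow> distinct p \<and> set p = {1..n}"

definition contains_132 :: "nat list \<Rightarrow> bool" where
  "contains_132 p \<longleftrightarrow> (\<exists>i j k. i < j \<and> j < k \<and> k < length p \<and>
       p ! i < p ! k \<and> p ! k < p ! j)"

definition Av132 :: "nat \<Rightarrow> nat list set" where
  "Av132 n = {p. is_perm n p \<and> \<not> contains_132 p}"

definition Des :: "nat list \<Rightarrow> nat set" where
  "Des p = {i. 1 \<le> i \<and> i < length p \<and> p ! (i - 1) > p ! i}"

(* alpha(S) = (s1, s2-s1, ..., n - sm) for S subseteq [n-1] *)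
definition alpha :: "nat \<Rightarrow> nat set \<Rightarrow> nat list" where
  "alpha n S = (let s = sorted_list_of_set S @ [n] in
                 map (\<lambda>i. s ! i - (if i = 0 then 0 else s ! (i - 1))) [0..<length s])"

(* Dyck paths: True = U, False = D *)
definition is_dyck :: "nat \<Rightarrow> bool list \<Rightarrow> bool" where
  "is_dyck n w \<longleftrightarrow> length w = 2 * n \<and> count_list w True = n \<and>
     (\<forall>k \<le> length w. count_list (take k w) False \<le> count_list (take k w) True)"

fun runs :: "bool \<Rightarrow> bool list \<Rightarrow> nat list" where
  "runs b [] = []"
| "runs b (x # xs) =
     (if x = b then
        (case runs b xs of
           [] \<Rightarrow> [1]
         | (r # rs) \<Rightarrow> (if xs \<noteq> [] \<and> hd xs = b then Suc r # rs else 1 # r # rs))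
      else runs b xs)"

definition delta :: "bool list \<Rightarrow> nat list" where
  "delta w = runs False w"

end

(*
  A 132-avoiding permutation of [n] with n >= 1 is uniquely of the form (s + |t|) n t, where
  s in Av_k(132) and t in Av_(n-1-k)(132) for some k < n: every entry left of the maximum n must
  exceed every entry right of it.  A Dyck path of semilength n >= 1 is uniquely of the form
  U a D b, split at its first return to the axis.  Recursing along these two decompositions
  gives a bijection from Av_n(132) onto the Dyck paths of semilength n.

  Let asc(p) be the composition of lengths of the maximal ascending runs of p, so that
  asc(p) = alpha(Des p).  Both asc and delta combine in the same way under the two
  decompositions: the last part of the left piece grows by one (through n, resp. through the
  D step) and the composition of the right piece is appended.  Hence the bijection carries asc
  to delta, and since alpha is injective on subsets of [n-1] the fibres Des p = S and
  delta = alpha(S) correspond.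
*)
theory Submission
  imports Defs
begin

section \<open>Compositions and ascending runs\<close>

definition inc_hd :: "nat list \<Rightarrow> nat list" where
  "inc_hd c = (case c of [] \<Rightarrow> [1] | r # rs \<Rightarrow> Suc r # rs)"

definition inc_last :: "nat list \<Rightarrow> nat list" where
  "inc_last c = (if c = [] then [1] else butlast c @ [Suc (last c)])"

lemma inc_hd_not_Nil [simp]: "inc_hd c \<noteq> []"
  by (auto simp: inc_hd_def split: list.splits)

lemma inc_hd_append: "c \<noteq> [] \<Longrightarrow> inc_hd (c @ d) = inc_hd c @ d"
  by (cases c) (auto simp: inc_hd_def)

lemma inc_last_Cons: "c \<noteq> [] \<Longrightarrow> inc_last (r # c) = r # inc_last c"
  by (auto simp: inc_last_def)

lemma inc_last_inc_hd: "c \<noteq> [] \<Longrightarrow> inc_last (inc_hd c) = inc_hd (inc_last c)"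
  by (cases c; cases "tl c") (auto simp: inc_last_def inc_hd_def)

fun asc_runs :: "nat list \<Rightarrow> nat list" where
  "asc_runs [] = []"
| "asc_runs (x # xs) =
     (case xs of
        [] \<Rightarrow> [1]
      | y # _ \<Rightarrow> if x > y then 1 # asc_runs xs else inc_hd (asc_runs xs))"

lemma asc_runs_not_Nil: "xs \<noteq> [] \<Longrightarrow> asc_runs xs \<noteq> []"
  by (cases xs; cases "tl xs") auto

lemma asc_runs_snoc_greater:
  "\<forall>x\<in>set xs. x < v \<Longrightarrow> asc_runs (xs @ [v]) = inc_last (asc_runs xs)"
proof (induction xs)
  case Nil
  then show ?case by (simp add: inc_last_def)
next
  case (Cons x xs)
  show ?case
  proof (cases xs)
    case Nil
    with Cons show ?thesis by (simp add: inc_last_def inc_hd_def)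
  next
    case (Cons y ys)
    have "asc_runs xs \<noteq> []" by (rule asc_runs_not_Nil) (simp add: Cons)
    with Cons.IH Cons.prems Cons show ?thesis
      by (simp add: inc_last_Cons inc_last_inc_hd)
  qed
qed

lemma asc_runs_append_descent:
  "ys = [] \<or> hd ys < v \<Longrightarrow> asc_runs (xs @ v # ys) = asc_runs (xs @ [v]) @ asc_runs ys"
proof (induction xs)
  case Nil
  then show ?case by (cases ys) auto
next
  case (Cons x xs)
  have "hd (xs @ v # ys) = hd (xs @ [v])" by (cases xs) auto
  moreover have "asc_runs (xs @ [v]) \<noteq> []" by (simp add: asc_runs_not_Nil)
  ultimately show ?case
    using Cons by (cases "xs @ v # ys"; cases "xs @ [v]") (auto simp: inc_hd_append)
qed

lemma asc_runs_append_max: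
  assumes "\<forall>x\<in>set xs. x < v" and "\<forall>y\<in>set ys. y < v"
  shows "asc_runs (xs @ v # ys) = inc_last (asc_runs xs) @ asc_runs ys"
  using assms asc_runs_append_descent[of ys v xs] asc_runs_snoc_greater[of xs v] by (cases ys) auto

lemma asc_runs_map_add: "asc_runs (map (\<lambda>x. x + c) xs) = asc_runs xs"
  by (induction xs) (auto split: list.splits)

section \<open>Descent sets and their compositions\<close>

fun diffs :: "nat \<Rightarrow> nat list \<Rightarrow> nat list" where
  "diffs a [] = []"
| "diffs a (x # xs) = (x - a) # diffs x xs"

lemma nth_diffs: "i < length s \<Longrightarrow> diffs a s ! i = s ! i - (if i = 0 then a else s ! (i - 1))"
  by (induction s arbitrary: a i) (auto simp: nth_Cons')

lemma length_diffs [simp]: "length (diffs a s) = length s"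
  by (induction s arbitrary: a) auto

lemma diffs_eq_map:
  "diffs a s = map (\<lambda>i. s ! i - (if i = 0 then a else s ! (i - 1))) [0..<length s]"
  by (rule nth_equalityI) (simp_all add: nth_diffs del: upt_Suc)

lemma alpha_eq_diffs: "alpha n S = diffs 0 (sorted_list_of_set S @ [n])"
  unfolding alpha_def Let_def diffs_eq_map ..

lemma diffs_map_Suc: "diffs (Suc a) (map Suc xs) = diffs a xs"
  by (induction xs arbitrary: a) auto

lemma diffs_map_Suc_0: "xs \<noteq> [] \<Longrightarrow> diffs 0 (map Suc xs) = inc_hd (diffs 0 xs)"
  by (cases xs) (auto simp: diffs_map_Suc inc_hd_def)

lemma diffs_inj:
  assumes "sorted xs" "sorted ys" "\<forall>x\<in>set xs. a \<le> x" "\<forall>y\<in>set ys. a \<le> y"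
    and "diffs a xs = diffs a ys"
  shows "xs = ys"
  using assms
proof (induction xs arbitrary: a ys)
  case Nil
  then show ?case by (cases ys) auto
next
  case (Cons x xs)
  then obtain y ys' where ys: "ys = y # ys'" by (cases ys) auto
  with Cons.prems have "x = y" by auto
  with Cons.prems ys have "xs = ys'" by (intro Cons.IH[where a = x]) auto
  with \<open>x = y\<close> ys show ?case by simp
qed

lemma alpha_inj_on:
  assumes "S \<subseteq> {1..n-1}" "T \<subseteq> {1..n-1}" "alpha n S = alpha n T"
  shows "S = T"
proof -
  have fin: "finite S" "finite T" using assms(1,2) finite_subset by auto
  have le: "\<forall>x\<in>S. x \<le> n" "\<forall>x\<in>T. x \<le> n" using assms(1,2) by fastforce+
  have "sorted_list_of_set S @ [n] = sorted_list_of_set T @ [n]"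
    by (rule diffs_inj[of _ _ 0]) (use assms(3) fin le in \<open>auto simp: alpha_eq_diffs sorted_append\<close>)
  with fin show ?thesis by (metis butlast_snoc set_sorted_list_of_set)
qed

lemma sorted_list_of_set_set_strict_sorted:
  "sorted_wrt (<) xs \<Longrightarrow> sorted_list_of_set (set xs) = xs"
  by (metis finite_set sorted_list_of_set(1) strict_sorted_equal strict_sorted_list_of_set)

lemma sorted_list_of_set_image_Suc:
  assumes "finite T"
  shows "sorted_list_of_set (Suc ` T) = map Suc (sorted_list_of_set T)"
proof -
  have "sorted_wrt (<) (map Suc (sorted_list_of_set T))"
    by (simp add: sorted_wrt_map strict_sorted_list_of_set)
  with assms show ?thesis by (metis list.set_map set_sorted_list_of_set sorted_list_of_set_set_strict_sorted)
qed

lemma sorted_list_of_set_insert_1_image_Suc: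
  assumes "finite T" "0 \<notin> T"
  shows "sorted_list_of_set (insert 1 (Suc ` T)) = 1 # map Suc (sorted_list_of_set T)"
proof -
  have "sorted_wrt (<) (1 # map Suc (sorted_list_of_set T))"
    using assms by (auto simp: sorted_wrt_map strict_sorted_list_of_set) (metis Suc_lessI not_gr0)
  with assms show ?thesis
    by (metis list.set_map list.simps(15) set_sorted_list_of_set sorted_list_of_set_set_strict_sorted)
qed

lemma Des_subset: "Des p \<subseteq> {1..length p - 1}"
  unfolding Des_def by auto

lemma Des_Cons_Cons:
  "Des (x # y # r) = (if x > y then insert 1 (Suc ` Des (y # r)) else Suc ` Des (y # r))"
proof -
  have "i \<in> Des (x # y # r) \<longleftrightarrow> i \<in> (if x > y then insert 1 (Suc ` Des (y # r)) else Suc ` Des (y # r))" for i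
    by (cases i; cases "i - 1") (auto simp: Des_def image_iff)
  then show ?thesis by blast
qed

lemma asc_runs_eq_alpha_Des: "p \<noteq> [] \<Longrightarrow> asc_runs p = alpha (length p) (Des p)"
proof (induction p)
  case (Cons x q)
  show ?case
  proof (cases q)
    case Nil
    then have "Des [x] = {}" by (auto simp: Des_def)
    with Nil show ?thesis by (simp add: alpha_eq_diffs)
  next
    case (Cons y r)
    let ?s = "sorted_list_of_set (Des q) @ [length q]"
    have IH: "asc_runs q = diffs 0 ?s" using Cons.IH Cons by (simp add: alpha_eq_diffs)
    have fin: "finite (Des q)" "0 \<notin> Des q" by (auto simp: Des_def)
    show ?thesis
    proof (cases "x > y")
      case True
      then have "Des (x # q) = insert 1 (Suc ` Des q)" using Cons by (simp add: Des_Cons_Cons)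
      then have "alpha (length (x # q)) (Des (x # q)) = diffs 0 (1 # map Suc ?s)"
        by (simp only: alpha_eq_diffs sorted_list_of_set_insert_1_image_Suc[OF fin]) simp
      also have "\<dots> = 1 # diffs 0 ?s" using diffs_map_Suc[of 0 ?s] by simp
      finally show ?thesis using True Cons IH by simp
    next
      case False
      then have "Des (x # q) = Suc ` Des q" using Cons by (simp add: Des_Cons_Cons)
      then have "alpha (length (x # q)) (Des (x # q)) = diffs 0 (map Suc ?s)"
        by (simp only: alpha_eq_diffs sorted_list_of_set_image_Suc[OF fin(1)]) simp
      also have "\<dots> = inc_hd (diffs 0 ?s)" by (rule diffs_map_Suc_0) simp
      finally show ?thesis using False Cons IH by simp
    qed
  qed
qed simp

lemma Des_eq_iff_asc_runs_eq_alpha: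
  assumes "length p = n" "1 \<le> n" "S \<subseteq> {1..n-1}"
  shows "Des p = S \<longleftrightarrow> asc_runs p = alpha n S"
proof -
  have "p \<noteq> []" using assms(1,2) by auto
  then have "asc_runs p = alpha n (Des p)" using asc_runs_eq_alpha_Des assms(1) by simp
  moreover have "Des p \<subseteq> {1..n-1}" using Des_subset assms(1) by blast
  ultimately show ?thesis using alpha_inj_on[OF _ assms(3)] by metis
qed

section \<open>Descent compositions of words\<close>

lemma runs_False_Cons_True [simp]: "runs False (True # xs) = runs False xs"
  by simp

lemma runs_False_Cons_False:
  "runs False (False # xs) =
     (if xs \<noteq> [] \<and> hd xs = False then inc_hd (runs False xs) else 1 # runs False xs)"
  by (auto simp: inc_hd_def split: list.splits)

lemma runs_False_not_Nil: "False \<in> set xs \<Longrightarrow> runs False xs \<noteq> []"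
  by (induction xs) (auto split: list.splits)

declare runs.simps [simp del]

lemma runs_False_snoc_False:
  "xs = [] \<or> last xs = False \<Longrightarrow> runs False (xs @ [False]) = inc_last (runs False xs)"
proof (induction xs)
  case Nil
  then show ?case by (simp add: runs.simps inc_last_def)
next
  case (Cons x xs)
  show ?case
  proof (cases "xs = []")
    case True
    then show ?thesis by (cases x) (simp_all add: runs.simps inc_last_def inc_hd_def)
  next
    case False
    with Cons.prems have "last xs = False" by simp
    with False have "runs False xs \<noteq> []" by (metis last_in_set runs_False_not_Nil)
    with Cons.IH \<open>last xs = False\<close> False show ?thesis
      by (cases x) (simp_all add: runs_False_Cons_False inc_last_Cons inc_last_inc_hd)
  qed
qed

lemma runs_False_append:
  "ys = [] \<or> hd ys = True \<Longrightarrow>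
     runs False (xs @ False # ys) = runs False (xs @ [False]) @ runs False ys"
proof (induction xs)
  case Nil
  then show ?case by (cases ys) (auto simp: runs_False_Cons_False runs.simps(1))
next
  case (Cons x xs)
  have "hd (xs @ False # ys) = hd (xs @ [False])" by (cases xs) auto
  moreover have "runs False (xs @ [False]) \<noteq> []" by (simp add: runs_False_not_Nil)
  ultimately show ?case
    using Cons by (cases x) (simp_all add: runs_False_Cons_False inc_hd_append)
qed

lemma delta_lift_append:
  "a = [] \<or> last a = False \<Longrightarrow> b = [] \<or> hd b = True \<Longrightarrow>
     delta (True # a @ False # b) = inc_last (delta a) @ delta b"
  unfolding delta_def using runs_False_append[of b a] runs_False_snoc_False[of a] by simp

section \<open>Dyck paths\<close>

lemma count_list_True_False: "count_list xs True + count_list xs False = length xs"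
  by (induction xs) auto

lemma is_dyck_0_iff: "is_dyck 0 w \<longleftrightarrow> w = []"
  by (auto simp: is_dyck_def)

lemma is_dyck_counts:
  "is_dyck k w \<Longrightarrow> count_list w True = k \<and> count_list w False = k \<and> length w = 2 * k"
  using count_list_True_False[of w] by (auto simp: is_dyck_def)

lemma is_dyck_prefix:
  "is_dyck k w \<Longrightarrow> j \<le> length w \<Longrightarrow> count_list (take j w) False \<le> count_list (take j w) True"
  by (auto simp: is_dyck_def)

lemma is_dyck_append:
  assumes a: "is_dyck k a" and b: "is_dyck m b"
  shows "is_dyck (k + m) (a @ b)"
  unfolding is_dyck_def
proof (intro conjI allI impI)
  fix j assume "j \<le> length (a @ b)"
  then show "count_list (take j (a @ b)) False \<le> count_list (take j (a @ b)) True"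
    using is_dyck_prefix[OF a, of j] is_dyck_prefix[OF b, of "j - length a"] is_dyck_counts[OF a]
    by (cases "j \<le> length a") auto
qed (use is_dyck_counts[OF a] is_dyck_counts[OF b] in auto)

lemma is_dyck_lift:
  assumes "is_dyck k a"
  shows "is_dyck (Suc k) (True # a @ [False])"
  unfolding is_dyck_def
proof (intro conjI allI impI)
  fix j assume "j \<le> length (True # a @ [False])"
  then show "count_list (take j (True # a @ [False])) False \<le> count_list (take j (True # a @ [False])) True"
    using is_dyck_prefix[OF assms, of "j - 1"] is_dyck_counts[OF assms]
    by (cases j; cases "j \<le> length a") (auto simp: take_Cons')
qed (use is_dyck_counts[OF assms] in auto)

lemma is_dyck_appendD:
  assumes w: "is_dyck n (u @ v)" and bal: "count_list u False = count_list u True"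
  shows "is_dyck (count_list u True) u \<and> is_dyck (n - count_list u True) v"
proof -
  have cw: "count_list (u @ v) True = n" "count_list (u @ v) False = n" "length (u @ v) = 2 * n"
    using is_dyck_counts[OF w] by auto
  have lu: "length u = 2 * count_list u True" using bal count_list_True_False[of u] by simp
  have "is_dyck (count_list u True) u"
    unfolding is_dyck_def
  proof (intro conjI allI impI)
    fix l assume "l \<le> length u"
    then show "count_list (take l u) False \<le> count_list (take l u) True"
      using is_dyck_prefix[OF w, of l] by simp
  qed (use lu in auto)
  moreover have "is_dyck (n - count_list u True) v"
    unfolding is_dyck_def
  proof (intro conjI allI impI)
    fix l assume "l \<le> length v"
    then show "count_list (take l v) False \<le> count_list (take l v) True"
      using is_dyck_prefix[OF w, of "length u + l"] bal by simp
  qed (use cw lu in auto)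
  ultimately show ?thesis ..
qed

lemma hd_dyck:
  assumes w: "is_dyck k w" and "0 < k"
  shows "hd w = True"
proof -
  obtain x r where "w = x # r" using is_dyck_counts[OF w] \<open>0 < k\<close> by (cases w) auto
  with is_dyck_prefix[OF w, of 1] show ?thesis by (cases x) auto
qed

lemma last_dyck:
  assumes w: "is_dyck k w" and "0 < k"
  shows "last w = False"
proof (rule ccontr)
  assume "last w \<noteq> False"
  moreover have "w \<noteq> []" using is_dyck_counts[OF w] \<open>0 < k\<close> by auto
  ultimately have wb: "w = butlast w @ [True]" by (metis append_butlast_last_id)
  have "count_list (butlast w) False \<le> count_list (butlast w) True"
    using is_dyck_prefix[OF w, of "length w - 1"] by (simp add: butlast_conv_take)
  moreover have "count_list w True = Suc (count_list (butlast w) True)"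
    and "count_list w False = count_list (butlast w) False"
    by (subst wb; simp)+
  ultimately show False using is_dyck_counts[OF w] by simp
qed

lemma primitive_dyck_eq_lift:
  assumes u: "is_dyck k u" "0 < k"
    and primitive: "\<And>i. 0 < i \<Longrightarrow> i < length u \<Longrightarrow>
                     count_list (take i u) False < count_list (take i u) True"
  obtains a where "u = True # a @ [False]" "is_dyck (k - 1) a"
proof -
  have len: "length u = 2 * k" using is_dyck_counts[OF u(1)] by simp
  then obtain x u' where "u = x # u'" by (cases u) (use u(2) in auto)
  moreover have "u' \<noteq> []" using len u(2) \<open>u = x # u'\<close> by auto
  then obtain a y where "u' = a @ [y]" by (cases u' rule: rev_exhaust) auto
  ultimately have ua: "u = x # a @ [y]" by simp
  have "x = True" using hd_dyck[OF u] ua by simp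
  moreover have "y = False" using last_dyck[OF u] ua by simp
  moreover have "is_dyck (k - 1) a"
    unfolding is_dyck_def
  proof (intro conjI allI impI)
    fix l assume "l \<le> length a"
    then show "count_list (take l a) False \<le> count_list (take l a) True"
      using primitive[of "Suc l"] ua \<open>x = True\<close> by simp
  qed (use is_dyck_counts[OF u(1)] ua \<open>x = True\<close> \<open>y = False\<close> in auto)
  ultimately show ?thesis using that ua by blast
qed

lemma dyck_first_return:
  assumes w: "is_dyck n w" and "1 \<le> n"
  obtains k a b where "k < n" "is_dyck k a" "is_dyck (n - 1 - k) b" "w = True # a @ False # b"
proof -
  define P where "P j \<longleftrightarrow> 0 < j \<and> count_list (take j w) False = count_list (take j w) True" for j
  have "P (length w)" unfolding P_def using is_dyck_counts[OF w] \<open>1 \<le> n\<close> by simp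
  define j where "j = (LEAST j. P j)"
  have "P j" unfolding j_def by (rule LeastI) fact
  have "j \<le> length w" unfolding j_def by (rule Least_le) fact
  define u where "u = take j w"
  define m where "m = count_list u True"
  have wuv: "w = u @ drop j w" by (simp add: u_def)
  have bal: "count_list u False = count_list u True" using \<open>P j\<close> by (simp add: P_def u_def)
  then have u: "is_dyck m u" and v: "is_dyck (n - m) (drop j w)"
    using is_dyck_appendD[of n u "drop j w"] w wuv by (auto simp: m_def)
  have "length u = j" using \<open>j \<le> length w\<close> by (simp add: u_def)
  then have "0 < m" using is_dyck_counts[OF u] \<open>P j\<close> by (simp add: P_def)
  have "m \<le> n" using is_dyck_counts[OF w] arg_cong[OF wuv, of "\<lambda>l. count_list l True"]
    by (simp add: m_def)
  have "count_list (take i u) False < count_list (take i u) True" if "0 < i" "i < length u" for i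
  proof -
    have "\<not> P i" using not_less_Least[of i P] that \<open>length u = j\<close> by (simp add: j_def)
    moreover have "count_list (take i u) False \<le> count_list (take i u) True"
      using is_dyck_prefix[OF u] that by simp
    ultimately show ?thesis using that \<open>length u = j\<close> by (simp add: P_def u_def)
  qed
  then obtain a where "u = True # a @ [False]" "is_dyck (m - 1) a"
    using primitive_dyck_eq_lift[OF u \<open>0 < m\<close>] by blast
  moreover have "n - 1 - (m - 1) = n - m" using \<open>0 < m\<close> by simp
  ultimately show ?thesis
    using that[of "m - 1" a "drop j w"] v wuv \<open>0 < m\<close> \<open>m \<le> n\<close> by simp
qed

lemma dyck_not_extended:
  assumes "is_dyck k a"
  shows "\<not> is_dyck k' (a @ False # r)"
proof
  assume "is_dyck k' (a @ False # r)"
  from is_dyck_prefix[OF this, of "Suc (length a)"] show False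
    using is_dyck_counts[OF assms] by simp
qed

lemma dyck_append_False_inj:
  assumes "is_dyck k a" "is_dyck k' a'" "a @ False # b = a' @ False # b'"
  shows "a = a' \<and> b = b'"
proof -
  obtain us where "a = a' @ us \<and> us @ False # b = False # b' \<or> a @ us = a' \<and> False # b = us @ False # b'"
    using assms(3) by (auto simp: append_eq_append_conv2)
  then show ?thesis
    using dyck_not_extended[OF assms(1)] dyck_not_extended[OF assms(2)] assms(1,2)
    by (cases us) auto
qed

lemma bij_betw_dyck_first_return:
  assumes "1 \<le> n"
  shows "bij_betw (\<lambda>(k, a, b). True # a @ False # b)
           (SIGMA k:{..<n}. {a. is_dyck k a} \<times> {b. is_dyck (n - 1 - k) b}) {w. is_dyck n w}"
  unfolding bij_betw_def
proof (intro conjI subset_antisym subsetI)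
  show "inj_on (\<lambda>(k, a, b). True # a @ False # b)
          (SIGMA k:{..<n}. {a. is_dyck k a} \<times> {b. is_dyck (n - 1 - k) b})"
  proof (rule inj_onI, clarsimp)
    fix k a b k' a' b'
    assume "is_dyck k a" "is_dyck k' a'" "a @ False # b = a' @ False # b'"
    then show "k = k' \<and> a = a' \<and> b = b'"
      using dyck_append_False_inj is_dyck_counts by metis
  qed
next
  fix w assume "w \<in> (\<lambda>(k, a, b). True # a @ False # b) `
                 (SIGMA k:{..<n}. {a. is_dyck k a} \<times> {b. is_dyck (n - 1 - k) b})"
  then obtain k a b where "k < n" "is_dyck k a" "is_dyck (n - 1 - k) b" "w = True # a @ False # b"
    by auto
  then show "w \<in> {w. is_dyck n w}"
    using is_dyck_append[OF is_dyck_lift[of k a], of "n - 1 - k" b] by simp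
next
  fix w assume "w \<in> {w. is_dyck n w}"
  then obtain k a b where "k < n" "is_dyck k a" "is_dyck (n - 1 - k) b" "w = True # a @ False # b"
    using dyck_first_return assms by blast
  then show "w \<in> (\<lambda>(k, a, b). True # a @ False # b) `
                 (SIGMA k:{..<n}. {a. is_dyck k a} \<times> {b. is_dyck (n - 1 - k) b})"
    by (intro image_eqI[of _ _ "(k, a, b)"]) auto
qed

lemma delta_dyck_lift_append:
  assumes "is_dyck k a" "is_dyck m b"
  shows "delta (True # a @ False # b) = inc_last (delta a) @ delta b"
proof (rule delta_lift_append)
  show "a = [] \<or> last a = False" using assms(1) last_dyck is_dyck_0_iff by (cases k) auto
  show "b = [] \<or> hd b = True" using assms(2) hd_dyck is_dyck_0_iff by (cases m) auto
qed

section \<open>132-avoiding permutations\<close>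

lemma length_perm: "is_perm n p \<Longrightarrow> length p = n"
  unfolding is_perm_def by (metis card_atLeastAtMost diff_Suc_1 distinct_card)

lemma Av132_D:
  "p \<in> Av132 n \<Longrightarrow> distinct p \<and> set p = {1..n} \<and> length p = n \<and> \<not> contains_132 p"
  using length_perm by (auto simp: Av132_def is_perm_def)

lemma Av132_0: "Av132 0 = {[]}"
  by (auto simp: Av132_def is_perm_def contains_132_def)

lemma contains_132_map_iff:
  assumes "strict_mono_on (set xs) f"
  shows "contains_132 (map f xs) \<longleftrightarrow> contains_132 xs"
proof -
  have "f (xs ! i) < f (xs ! j) \<longleftrightarrow> xs ! i < xs ! j" if "i < length xs" "j < length xs" for i j
    using strict_mono_on_less[OF assms] that by simp
  then show ?thesis unfolding contains_132_def by (auto 0 4 intro: less_trans)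
qed

lemma contains_132_append_left: "contains_132 xs \<Longrightarrow> contains_132 (xs @ ys)"
proof -
  assume "contains_132 xs"
  then obtain i j k where "i < j" "j < k" "k < length xs" "xs ! i < xs ! k" "xs ! k < xs ! j"
    unfolding contains_132_def by blast
  then show ?thesis unfolding contains_132_def
    by (intro exI[of _ i] exI[of _ j] exI[of _ k]) (auto simp: nth_append)
qed

lemma contains_132_append_right: "contains_132 ys \<Longrightarrow> contains_132 (xs @ ys)"
proof -
  assume "contains_132 ys"
  then obtain i j k where "i < j" "j < k" "k < length ys" "ys ! i < ys ! k" "ys ! k < ys ! j"
    unfolding contains_132_def by blast
  then show ?thesis unfolding contains_132_def
    by (intro exI[of _ "length xs + i"] exI[of _ "length xs + j"] exI[of _ "length xs + k"]) auto
qed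

lemma contains_132_append_maxD:
  assumes xs: "\<forall>x\<in>set xs. x < v" and ys: "\<forall>y\<in>set ys. y < v"
    and "contains_132 (xs @ v # ys)" (is "contains_132 ?p")
  shows "contains_132 xs \<or> contains_132 ys \<or> (\<exists>x\<in>set xs. \<exists>y\<in>set ys. x < y)"
proof -
  let ?l = "length xs"
  have p_xs: "?p ! h = xs ! h" if "h < ?l" for h using that by (simp add: nth_append)
  have p_ys: "?p ! h = ys ! (h - ?l - 1)" if "?l < h" for h using that by (simp add: nth_append nth_Cons')
  have p_le: "?p ! h \<le> v" if "h < length ?p" for h
    using nth_mem[OF that] xs ys by (auto simp: less_imp_le)
  obtain i j k where ijk: "i < j" "j < k" "k < length ?p" "?p ! i < ?p ! k" "?p ! k < ?p ! j"
    using assms(3) unfolding contains_132_def by blast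
  have "i \<noteq> ?l" "k \<noteq> ?l" using ijk p_le[of k] p_le[of j] by auto
  then consider "k < ?l" | "?l < i" | "i < ?l" "?l < k" by linarith
  then show ?thesis
  proof cases
    case 1
    then have "contains_132 xs" unfolding contains_132_def using ijk p_xs
      by (intro exI[of _ i] exI[of _ j] exI[of _ k]) auto
    then show ?thesis ..
  next
    case 2
    have "i - ?l - 1 < j - ?l - 1" "j - ?l - 1 < k - ?l - 1" "k - ?l - 1 < length ys"
      using 2 ijk by auto
    moreover have "ys ! (i - ?l - 1) < ys ! (k - ?l - 1)" "ys ! (k - ?l - 1) < ys ! (j - ?l - 1)"
      using 2 ijk p_ys by auto
    ultimately have "contains_132 ys" unfolding contains_132_def by blast
    then show ?thesis by blast
  next
    case 3
    then show ?thesis using ijk p_xs p_ys by force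
  qed
qed

lemma contains_132_append_max:
  assumes xs: "\<forall>x\<in>set xs. x < v" and ys: "\<forall>y\<in>set ys. y < v"
  shows "contains_132 (xs @ v # ys) \<longleftrightarrow>
           contains_132 xs \<or> contains_132 ys \<or> (\<exists>x\<in>set xs. \<exists>y\<in>set ys. x < y)"
proof
  assume "contains_132 xs \<or> contains_132 ys \<or> (\<exists>x\<in>set xs. \<exists>y\<in>set ys. x < y)"
  then consider "contains_132 xs" | "contains_132 ys" | i h where "i < length xs" "h < length ys" "xs ! i < ys ! h"
    by (auto simp: in_set_conv_nth)
  then show "contains_132 (xs @ v # ys)"
  proof cases
    case 3
    then have "ys ! h < v" using ys by simp
    with 3 show ?thesis unfolding contains_132_def
      by (intro exI[of _ i] exI[of _ "length xs"] exI[of _ "length xs + 1 + h"]) (auto simp: nth_append)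
  qed (use contains_132_append_left contains_132_append_right[of ys "xs @ [v]"] in auto)
qed (use contains_132_append_maxD[OF xs ys] in blast)

definition max_join :: "nat list \<Rightarrow> nat list \<Rightarrow> nat list" where
  "max_join s t = map (\<lambda>x. x + length t) s @ (length s + length t + 1) # t"

lemma max_join_in_Av132:
  assumes s: "s \<in> Av132 k" and t: "t \<in> Av132 m"
  shows "max_join s t \<in> Av132 (k + 1 + m)"
proof -
  have s': "distinct s" "set s = {1..k}" "length s = k" "\<not> contains_132 s"
    and t': "distinct t" "set t = {1..m}" "length t = m" "\<not> contains_132 t"
    using Av132_D[OF s] Av132_D[OF t] by auto
  have shift: "strict_mono_on (set s) (\<lambda>x. x + m)" by (simp add: strict_mono_on_def)
  have "distinct (max_join s t)" "set (max_join s t) = {1..k + 1 + m}"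
    using s' t' by (auto simp: max_join_def distinct_map inj_on_def)
  moreover have "\<not> contains_132 (max_join s t)"
    unfolding max_join_def using s' t'
    by (subst contains_132_append_max) (auto simp: contains_132_map_iff[OF shift])
  ultimately show ?thesis by (simp add: Av132_def is_perm_def)
qed

lemma max_join_inj:
  assumes "s \<in> Av132 k" "t \<in> Av132 m" "s' \<in> Av132 k'" "t' \<in> Av132 m'"
    and "k + 1 + m = k' + 1 + m'" and "max_join s t = max_join s' t'"
  shows "k = k' \<and> s = s' \<and> t = t'"
proof -
  have s: "length s = k" "set s = {1..k}" and t: "length t = m" "set t = {1..m}"
    and s': "length s' = k'" and t': "length t' = m'"
    using assms(1-4) Av132_D by auto
  have fresh: "k + 1 + m \<notin> set (map (\<lambda>x. x + m) s)" "k + 1 + m \<notin> set t"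
    using s t by auto
  have "map (\<lambda>x. x + m) s @ (k + 1 + m) # t = map (\<lambda>x. x + m') s' @ (k + 1 + m) # t'"
    using assms(5,6) s t s' t' by (simp add: max_join_def)
  then have "map (\<lambda>x. x + m) s = map (\<lambda>x. x + m') s'" "t = t'"
    by (simp_all only: append_Cons_eq_iff[OF fresh])
  moreover from \<open>t = t'\<close> have "m = m'" using t t' by simp
  ultimately have "s = s'" by (simp add: inj_map_eq_map inj_on_def)
  with \<open>t = t'\<close> show ?thesis using s s' by simp
qed

lemma set_eq_initial_segment:
  assumes "set xs \<union> set ys = {1..N}" "\<forall>x\<in>set xs. \<forall>y\<in>set ys. y < x" "distinct ys"
  shows "set ys = {1..length ys}"
proof (cases "ys = []")
  case False
  define M where "M = Max (set ys)"
  have "M \<in> set ys" using False by (simp add: M_def)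
  have "M \<le> N" using assms(1) \<open>M \<in> set ys\<close> by auto
  have "set ys \<subseteq> {1..M}" using assms(1) by (auto simp: M_def)
  moreover have "{1..M} \<subseteq> set ys"
  proof
    fix z assume "z \<in> {1..M}"
    then have "z \<in> set xs \<union> set ys" using assms(1) \<open>M \<le> N\<close> by auto
    with assms(2) \<open>M \<in> set ys\<close> \<open>z \<in> {1..M}\<close> show "z \<in> set ys" by fastforce
  qed
  ultimately have "set ys = {1..M}" by blast
  moreover from this have "M = length ys" using distinct_card[OF assms(3)] by simp
  ultimately show ?thesis by simp
qed simp

lemma Av132_shift_down:
  assumes "distinct xs" "set xs = {m + 1..m + k}" "\<not> contains_132 xs"
  obtains s where "s \<in> Av132 k" "xs = map (\<lambda>x. x + m) s"
proof -
  define s where "s = map (\<lambda>x. x - m) xs"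
  have "map (\<lambda>x. x - m + m) xs = xs" by (rule map_idI) (use assms(2) in auto)
  then have xs_s: "xs = map (\<lambda>x. x + m) s" by (simp add: s_def comp_def)
  have "(\<lambda>x. x + m) ` set s = (\<lambda>x. x + m) ` {1..k}" using assms(2) xs_s by (simp add: add.commute)
  then have "set s = {1..k}" by (simp add: inj_image_eq_iff inj_on_def del: image_add_atLeastAtMost')
  moreover have "distinct s" using assms(1) xs_s by (simp add: distinct_map)
  moreover have "\<not> contains_132 s"
    using assms(3) xs_s contains_132_map_iff[of s "\<lambda>x. x + m"] by (simp add: strict_mono_on_def)
  ultimately have "s \<in> Av132 k" by (simp add: Av132_def is_perm_def)
  then show ?thesis using xs_s by (rule that)
qed

lemma Av132_eq_max_join:
  assumes p: "p \<in> Av132 n" and "1 \<le> n"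
  obtains k s t where "k < n" "s \<in> Av132 k" "t \<in> Av132 (n - 1 - k)" "p = max_join s t"
proof -
  have p': "distinct p" "set p = {1..n}" "length p = n" "\<not> contains_132 p"
    using Av132_D[OF p] by auto
  obtain xs ys where pxy: "p = xs @ n # ys"
    using split_list[of n p] p' \<open>1 \<le> n\<close> by auto
  define k m where "k = length xs" and "m = length ys"
  have nkm: "n = k + 1 + m" using p' pxy by (simp add: k_def m_def)
  have sets: "insert n (set xs \<union> set ys) = {1..n}" "n \<notin> set xs" "n \<notin> set ys"
    "set xs \<inter> set ys = {}" "distinct xs" "distinct ys"
    using p' pxy by auto
  have "{1..n} - {n} = {1..n - 1}" by auto
  with sets(1-3) have union: "set xs \<union> set ys = {1..n - 1}" by blast
  then have "\<forall>x\<in>set xs \<union> set ys. x < n" using \<open>1 \<le> n\<close> by auto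
  with p' pxy have xs: "\<not> contains_132 xs" and ys: "\<not> contains_132 ys"
    and no_cross: "\<forall>x\<in>set xs. \<forall>y\<in>set ys. \<not> x < y"
    by (auto simp: contains_132_append_max)
  with sets(4) have greater: "\<forall>x\<in>set xs. \<forall>y\<in>set ys. y < x"
    by (metis disjoint_iff linorder_neqE_nat)
  have set_ys: "set ys = {1..m}"
    using set_eq_initial_segment[OF union greater sets(6)] by (simp add: m_def)
  have "set xs = {1..n - 1} - set ys" using union sets(4) by blast
  also have "\<dots> = {m + 1..m + k}" using set_ys nkm by auto
  finally obtain s where "s \<in> Av132 k" "xs = map (\<lambda>x. x + m) s"
    using Av132_shift_down sets(5) xs by blast
  moreover have "ys \<in> Av132 (n - 1 - k)" using sets(6) ys set_ys nkm by (simp add: Av132_def is_perm_def)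
  moreover have "p = max_join s ys"
    using pxy \<open>xs = map (\<lambda>x. x + m) s\<close> nkm by (simp add: max_join_def k_def m_def)
  moreover have "k < n" using nkm by simp
  ultimately show ?thesis using that by blast
qed

lemma bij_betw_max_join:
  assumes "1 \<le> n"
  shows "bij_betw (\<lambda>(k, s, t). max_join s t) (SIGMA k:{..<n}. Av132 k \<times> Av132 (n - 1 - k)) (Av132 n)"
  unfolding bij_betw_def
proof (intro conjI subset_antisym subsetI)
  show "inj_on (\<lambda>(k, s, t). max_join s t) (SIGMA k:{..<n}. Av132 k \<times> Av132 (n - 1 - k))"
  proof (rule inj_onI, clarsimp)
    fix k s t k' s' t'
    assume "k < n" "s \<in> Av132 k" "t \<in> Av132 (n - Suc k)"
      "k' < n" "s' \<in> Av132 k'" "t' \<in> Av132 (n - Suc k')" "max_join s t = max_join s' t'"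
    moreover have "k + 1 + (n - Suc k) = k' + 1 + (n - Suc k')" using \<open>k < n\<close> \<open>k' < n\<close> by simp
    ultimately show "k = k' \<and> s = s' \<and> t = t'" using max_join_inj by blast
  qed
next
  fix p assume "p \<in> (\<lambda>(k, s, t). max_join s t) ` (SIGMA k:{..<n}. Av132 k \<times> Av132 (n - 1 - k))"
  then obtain k s t where "k < n" "s \<in> Av132 k" "t \<in> Av132 (n - 1 - k)" "p = max_join s t"
    by auto
  moreover have "k + 1 + (n - 1 - k) = n" using \<open>k < n\<close> by simp
  ultimately show "p \<in> Av132 n" using max_join_in_Av132 by metis
next
  fix p assume "p \<in> Av132 n"
  then obtain k s t where "k < n" "s \<in> Av132 k" "t \<in> Av132 (n - 1 - k)" "p = max_join s t"
    using Av132_eq_max_join assms by blast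
  then show "p \<in> (\<lambda>(k, s, t). max_join s t) ` (SIGMA k:{..<n}. Av132 k \<times> Av132 (n - 1 - k))"
    by (intro image_eqI[of _ _ "(k, s, t)"]) auto
qed

lemma asc_runs_max_join:
  assumes "s \<in> Av132 k" "t \<in> Av132 m"
  shows "asc_runs (max_join s t) = inc_last (asc_runs s) @ asc_runs t"
proof -
  have "set s = {1..k}" "set t = {1..m}" "length s = k" "length t = m"
    using assms Av132_D by auto
  then show ?thesis
    unfolding max_join_def by (subst asc_runs_append_max) (auto simp: asc_runs_map_add)
qed

section \<open>Transport along Catalan decompositions\<close>

lemma bij_betw_Sigma_fibrewise:
  assumes "\<And>k. k \<in> K \<Longrightarrow> bij_betw (f k) (A k) (B k)"
  shows "bij_betw (\<lambda>(k, x). (k, f k x)) (Sigma K A) (Sigma K B)"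
  unfolding bij_betw_def
proof
  show "inj_on (\<lambda>(k, x). (k, f k x)) (Sigma K A)"
    using assms by (auto simp: inj_on_def bij_betw_def)
  show "(\<lambda>(k, x). (k, f k x)) ` Sigma K A = Sigma K B"
  proof (intro subset_antisym subsetI)
    fix y assume "y \<in> Sigma K B"
    then obtain k b where "y = (k, b)" "k \<in> K" "b \<in> B k" by blast
    with assms obtain a where "a \<in> A k" "b = f k a" by (metis bij_betw_imp_surj_on imageE)
    with \<open>y = (k, b)\<close> \<open>k \<in> K\<close> show "y \<in> (\<lambda>(k, x). (k, f k x)) ` Sigma K A" by force
  qed (auto intro: bij_betw_apply assms)
qed

lemma ex_bij_betw_preserving_catalan_decomposition:
  fixes A :: "nat \<Rightarrow> 'a set" and B :: "nat \<Rightarrow> 'b set"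
    and joinA :: "'a \<Rightarrow> 'a \<Rightarrow> 'a" and joinB :: "'b \<Rightarrow> 'b \<Rightarrow> 'b"
    and statA :: "'a \<Rightarrow> 'c" and statB :: "'b \<Rightarrow> 'c" and G :: "'c \<Rightarrow> 'c \<Rightarrow> 'c"
  assumes A0: "A 0 = {a0}" and B0: "B 0 = {b0}" and stat0: "statA a0 = statB b0"
    and joinA: "\<And>n. 1 \<le> n \<Longrightarrow>
      bij_betw (\<lambda>(k, s, t). joinA s t) (SIGMA k:{..<n}. A k \<times> A (n - 1 - k)) (A n)"
    and joinB: "\<And>n. 1 \<le> n \<Longrightarrow>
      bij_betw (\<lambda>(k, s, t). joinB s t) (SIGMA k:{..<n}. B k \<times> B (n - 1 - k)) (B n)"
    and statA: "\<And>k m s t. s \<in> A k \<Longrightarrow> t \<in> A m \<Longrightarrow> statA (joinA s t) = G (statA s) (statA t)"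
    and statB: "\<And>k m s t. s \<in> B k \<Longrightarrow> t \<in> B m \<Longrightarrow> statB (joinB s t) = G (statB s) (statB t)"
  shows "\<exists>f. bij_betw f (A n) (B n) \<and> (\<forall>x\<in>A n. statB (f x) = statA x)"
proof (induction n rule: less_induct)
  case (less n)
  show ?case
  proof (cases "n = 0")
    case True
    then show ?thesis using A0 B0 stat0 by (intro exI[of _ "\<lambda>_. b0"]) (simp add: bij_betw_def)
  next
    case False
    have "\<forall>k. \<exists>f. k < n \<longrightarrow> bij_betw f (A k) (B k) \<and> (\<forall>x\<in>A k. statB (f x) = statA x)"
      using less.IH by blast
    then obtain F where F: "\<And>k. k < n \<Longrightarrow>
        bij_betw (F k) (A k) (B k) \<and> (\<forall>x\<in>A k. statB (F k x) = statA x)"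
      by metis
    define SA where "SA = (SIGMA k:{..<n}. A k \<times> A (n - 1 - k))"
    define SB where "SB = (SIGMA k:{..<n}. B k \<times> B (n - 1 - k))"
    define g where "g = (\<lambda>(k, x). (k, map_prod (F k) (F (n - 1 - k)) x))"
    have g: "bij_betw g SA SB"
      unfolding g_def SA_def SB_def
      using False F by (intro bij_betw_Sigma_fibrewise bij_betw_map_prod) auto
    have jA: "bij_betw (\<lambda>(k, s, t). joinA s t) SA (A n)"
      and jB: "bij_betw (\<lambda>(k, s, t). joinB s t) SB (B n)"
      using False joinA joinB by (simp_all add: SA_def SB_def)
    define f where "f = (\<lambda>(k, s, t). joinB s t) \<circ> g \<circ> inv_into SA (\<lambda>(k, s, t). joinA s t)"
    have "bij_betw f (A n) (B n)"
      unfolding f_def using bij_betw_trans[OF bij_betw_trans[OF bij_betw_inv_into[OF jA] g] jB]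
      by (simp add: comp_assoc)
    moreover have "statB (f x) = statA x" if "x \<in> A n" for x
    proof -
      have "x \<in> (\<lambda>(k, s, t). joinA s t) ` SA" using \<open>x \<in> A n\<close> jA by (simp add: bij_betw_def)
      then obtain k s t where kst: "(k, s, t) \<in> SA" "x = joinA s t" by force
      then have "inv_into SA (\<lambda>(k, s, t). joinA s t) x = (k, s, t)"
        using inv_into_f_f[OF _ kst(1), of "\<lambda>(k, s, t). joinA s t"] jA kst(2) by (simp add: bij_betw_def)
      then have "f x = joinB (F k s) (F (n - 1 - k) t)" by (simp add: f_def g_def)
      have "k < n" "n - 1 - k < n" "s \<in> A k" "t \<in> A (n - 1 - k)"
        using kst False by (auto simp: SA_def)
      then have "F k s \<in> B k" "statB (F k s) = statA s"
        and "F (n - 1 - k) t \<in> B (n - 1 - k)" "statB (F (n - 1 - k) t) = statA t"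
        using F[of k] F[of "n - 1 - k"] by (auto simp: bij_betw_apply)
      with \<open>f x = _\<close> show ?thesis
        using statA[OF \<open>s \<in> A k\<close> \<open>t \<in> A (n - 1 - k)\<close>] statB kst(2) by simp
    qed
    ultimately show ?thesis by blast
  qed
qed

lemma card_Collect_bij_betw:
  assumes "bij_betw f A B"
  shows "card {x \<in> A. P (f x)} = card {y \<in> B. P y}"
proof (rule bij_betw_same_card)
  show "bij_betw f {x \<in> A. P (f x)} {y \<in> B. P y}"
    using assms by (auto simp: bij_betw_def inj_on_def)
qed

lemma ex_bij_betw_Av132_dyck:
  "\<exists>f. bij_betw f (Av132 n) {w. is_dyck n w} \<and> (\<forall>p\<in>Av132 n. delta (f p) = asc_runs p)"
proof (rule ex_bij_betw_preserving_catalan_decomposition[where A = Av132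
      and B = "\<lambda>n. {w. is_dyck n w}" and joinA = max_join and joinB = "\<lambda>a b. True # a @ False # b"
      and G = "\<lambda>c d. inc_last c @ d"])
  show "Av132 0 = {[]}" "{w. is_dyck 0 w} = {[]}" "asc_runs [] = delta []"
    by (simp_all add: Av132_0 is_dyck_0_iff delta_def runs.simps)
qed (fact bij_betw_max_join bij_betw_dyck_first_return |
     auto intro: asc_runs_max_join delta_dyck_lift_append)+

theorem lemma4p6:
  fixes n :: nat and S :: "nat set"
  assumes "n \<ge> 1" and "S \<subseteq> {1..n-1}"
  shows "card {p \<in> Av132 n. Des p = S} = card {w. is_dyck n w \<and> delta w = alpha n S}"
proof -
  obtain f where bij: "bij_betw f (Av132 n) {w. is_dyck n w}"
    and stat: "\<forall>p\<in>Av132 n. delta (f p) = asc_runs p"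
    using ex_bij_betw_Av132_dyck by blast
  have "Des p = S \<longleftrightarrow> delta (f p) = alpha n S" if "p \<in> Av132 n" for p
    using stat that Av132_D[OF that] Des_eq_iff_asc_runs_eq_alpha[OF _ assms] by simp
  then have "{p \<in> Av132 n. Des p = S} = {p \<in> Av132 n. delta (f p) = alpha n S}" by blast
  then show ?thesis using card_Collect_bij_betw[OF bij] by simp
qed

end
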